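(* Let $\mathcal{X}$ be an input space with metric $d$, let $\Theta$ be a parameter (hypothesis) space with metric $d$, and let $\mathcal{Y}$ be an output space which is a normed vector space with norm $\|\cdot\|$. Let $f:\mathcal{X}\times\Theta\to\mathcal{Y}$, $(x,\theta)\mapsto f(x;\theta)$, be a parameterized family of hypotheses, let $\theta^*\in\Theta$ and set $f^*(x)=f(x;\theta^* )$. Let $\mathcal{L}:\mathcal{Y}\times\mathcal{X}\to\mathbb{R}$ be a loss function, and for a probability distribution $r$ on $\mathcal{X}$ define the error $e(\theta,r)=\mathbb{E}_{x\sim r}[\mathcal{L}(f(x;\theta),x)]$. Let $p$ (test distribution) and $q$ (training distribution) be probability distributions on $\mathcal{X}$, let $W(p,q)$ be their 1-Wasserstein distance with respect to $d$, and let $\Theta_q=\{\theta\in\Theta : e(\theta,q)=0\}$. Let $\theta$ be a random variable with some probability distribution on $\Theta$ such that $\mathbb{P}(\theta\in\Theta_q)>0$, and for $\varepsilon>0$ define the inductive bias complexity $$\tilde I=-\log \mathbb{P}\big(e(\theta,p)\le\varepsilon \mid e(\theta,q)=0\big).$$ Suppose that: (i) $\mathcal{L}(y,x)\ge 0$ for all $y,x$, with equality if and only if $y=f^*(x)$; (ii) $\mathcal{L}(y+f^*(x_2)-f^*(x_1),x_2)=\mathcal{L}(y,x_1)$ for all $y\in\mathcal{Y}$, $x_1,x_2\in\mathcal{X}$; (iii) there is a constant $L_{\mathcal{L}}$ with $\mathcal{L}(y+\delta,x)-\mathcal{L}(y,x)\le L_{\mathcal{L}}\|\delta\|$ for all $y,\delta\in\mathcal{Y}$,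 $x\in\mathcal{X}$; (iv) there is a constant $L_f$ with $\|f(x_1;\theta_1)-f(x_1;\theta_2)-f(x_2;\theta_1)+f(x_2;\theta_2)\|\le L_f\, d(x_1,x_2)\, d(\theta_1,\theta_2)$ for all $x_1,x_2\in\mathcal{X}$, $\theta_1,\theta_2\in\Theta$. Then $$\tilde I\le -\log \mathbb{P}\left(d(\theta,\theta^* )\le \frac{\varepsilon}{L_{\mathcal{L}}L_f W(p,q)} \;\middle|\; \theta\in\Theta_q\right).$$
   Context: The ratio $\varepsilon/(L_{\mathcal{L}}L_fW(p,q))$ is interpreted as $+\infty$ if its denominator is $0$. All expectations are assumed to exist. $\log$ denotes the logarithm (any fixed base). *)

theory Defs
  imports "HOL-Probability.Probability"
begin

definition err :: "('x \<Rightarrow> 't \<Rightarrow> 'y) \<Rightarrow> ('y \<Rightarrow> 'x \<Rightarrow> real) \<Rightarrow> 't \<Rightarrow> 'x measure \<Rightarrow> real" where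
  "err f L th r = (\<integral>x. L (f x th) x \<partial>r)"

definition couplings :: "'x measure \<Rightarrow> 'x measure \<Rightarrow> ('x \<times> 'x) measure set" where
  "couplings p q = {g. prob_space g \<and> sets g = sets (p \<Otimes>\<^sub>M q) \<and>
                        distr g p fst = p \<and> distr g q snd = q}"

definition wasserstein1 :: "'x::metric_space measure \<Rightarrow> 'x measure \<Rightarrow> ennreal" where
  "wasserstein1 p q = (INF g \<in> couplings p q. \<integral>\<^sup>+ z. ennreal (dist (fst z) (snd z)) \<partial>g)"

definition neglog :: "real \<Rightarrow> real \<Rightarrow> ereal" where
  "neglog b t = (if t = 0 then \<infinity> else ereal (- log b t))"

end

theory Submission
  imports Defs
begin

text \<open>
  If \<open>e(\<theta>, q) = 0\<close>, then \<open>h(x) = \<L>(f(x;\<theta>), x)\<close> vanishes \<open>q\<close>-almost everywhere, and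
  assumptions (ii)--(iv) make \<open>h\<close> Lipschitz with constant \<open>L\<^sub>\<L> L\<^sub>f d(\<theta>, \<theta>\<^sup>*)\<close>.
  Hence under any coupling of \<open>p\<close> and \<open>q\<close> we have \<open>h(x\<^sub>1) \<le> L\<^sub>\<L> L\<^sub>f d(\<theta>, \<theta>\<^sup>*) d(x\<^sub>1, x\<^sub>2)\<close>
  almost surely, and integrating gives \<open>e(\<theta>, p) \<le> L\<^sub>\<L> L\<^sub>f d(\<theta>, \<theta>\<^sup>*) W(p, q)\<close>. So the event
  \<open>d(\<theta>, \<theta>\<^sup>*) \<le> \<epsilon> / (L\<^sub>\<L> L\<^sub>f W(p, q))\<close> is contained in \<open>e(\<theta>, p) \<le> \<epsilon>\<close> on \<open>\<Theta>\<^sub>q\<close>, and \<open>-log\<close> is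
  antitone.
\<close>

lemma ennreal_mult_le_of_le_divide:
  fixes a b e :: ennreal
  assumes "a \<le> e / b"
  shows "a * b \<le> e"
proof -
  have "a * b \<le> e / b * b"
    using assms by (rule mult_right_mono) simp
  also have "e / b * b \<le> e"
  proof (cases "b = 0 \<or> b = top")
    case True then show ?thesis by (auto simp: ennreal_top_divide)
  next
    case False then show ?thesis
      by (metis ennreal_divide_self ennreal_divide_times mult.right_neutral order.refl top.not_eq_extremum)
  qed
  finally show ?thesis .
qed

text \<open>No measurability of \<open>u\<close> is needed, which matters below: \<open>dist\<close> need not be measurable
  for the product \<open>\<sigma>\<close>-algebra \<open>borel \<Otimes>\<^sub>M borel\<close> on which couplings live.\<close>

lemma nn_integral_cmult_le:
  fixes c :: ennreal
  assumes "c < top"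
  shows "(\<integral>\<^sup>+ x. c * u x \<partial>M) \<le> c * integral\<^sup>N M u"
proof (cases "c = 0")
  case True then show ?thesis by simp
next
  case False
  have cancel: "c * (v / c) = v" for v
    using False assms by (metis ennreal_times_divide mult.commute mult_divide_eq_ennreal top.not_eq_extremum)
  show ?thesis unfolding nn_integral_def
  proof (rule SUP_least)
    fix s assume "s \<in> {g. simple_function M g \<and> g \<le> (\<lambda>x. c * u x)}"
    then have s: "simple_function M s" "\<And>x. s x \<le> c * u x" by (auto simp: le_fun_def)
    define s' where "s' x = s x / c" for x
    have s'_simple: "simple_function M s'"
      unfolding s'_def using s(1) by (rule simple_function_compose1)
    have "s' \<le> u"
      unfolding le_fun_def s'_def using divide_right_mono_ennreal[OF s(2), of _ c] cancel
      by (metis ennreal_times_divide)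
    have "integral\<^sup>S M s = integral\<^sup>S M (\<lambda>x. c * s' x)"
      by (simp add: s'_def cancel)
    also have "\<dots> = c * integral\<^sup>S M s'"
      by (rule simple_integral_mult[OF s'_simple])
    also have "\<dots> \<le> c * (SUP g\<in>{g. simple_function M g \<and> g \<le> u}. integral\<^sup>S M g)"
      by (intro mult_left_mono SUP_upper) (auto simp: s'_simple \<open>s' \<le> u\<close>)
    finally show "integral\<^sup>S M s \<le> c * (SUP g\<in>{g. simple_function M g \<and> g \<le> u}. integral\<^sup>S M g)" .
  qed
qed

lemma pair_measure_in_couplings:
  assumes "prob_space p" "prob_space q"
  shows "p \<Otimes>\<^sub>M q \<in> couplings p q"
proof -
  interpret P: prob_space p by fact
  interpret Q: prob_space q by fact
  interpret PQ: pair_prob_space p q by unfold_locales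
  have "distr (p \<Otimes>\<^sub>M q) q snd = q"
  proof (intro measure_eqI)
    fix A assume A: "A \<in> sets (distr (p \<Otimes>\<^sub>M q) q snd)"
    then have "emeasure (distr (p \<Otimes>\<^sub>M q) q snd) A = emeasure (p \<Otimes>\<^sub>M q) (space p \<times> A)"
      by (auto simp: emeasure_distr space_pair_measure dest: sets.sets_into_space
               intro!: arg_cong2[where f=emeasure])
    with A show "emeasure (distr (p \<Otimes>\<^sub>M q) q snd) A = emeasure q A"
      using Q.emeasure_pair_measure_Times[OF sets.top, of A p] P.emeasure_space_1 by simp
  qed simp
  then show ?thesis
    unfolding couplings_def using PQ.prob_space_axioms Q.distr_pair_fst by auto
qed

lemma nn_integral_le_coupling_cost:
  fixes h :: "'x::metric_space \<Rightarrow> ennreal"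
  assumes g: "g \<in> couplings p q"
    and h_p: "h \<in> borel_measurable p" and h_q: "h \<in> borel_measurable q"
    and h_q_0: "integral\<^sup>N q h = 0"
    and c: "c < top"
    and lip: "\<And>x y. h x \<le> h y + c * ennreal (dist x y)"
  shows "integral\<^sup>N p h \<le> c * (\<integral>\<^sup>+ z. ennreal (dist (fst z) (snd z)) \<partial>g)"
proof -
  from g have sets_g: "sets g = sets (p \<Otimes>\<^sub>M q)"
    and marg_p: "distr g p fst = p" and marg_q: "distr g q snd = q"
    unfolding couplings_def by auto
  have fst_meas: "fst \<in> measurable g p" and snd_meas: "snd \<in> measurable g q"
    using measurable_cong_sets[OF sets_g refl] by auto
  have "(\<integral>\<^sup>+ z. h (snd z) \<partial>g) = integral\<^sup>N q h"
    using nn_integral_distr[OF snd_meas, of h] h_q marg_q by simp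
  then have "AE z in g. h (snd z) = 0"
    using h_q_0 nn_integral_0_iff_AE[of "\<lambda>z. h (snd z)" g] h_q snd_meas by simp
  then have "AE z in g. h (fst z) \<le> c * ennreal (dist (fst z) (snd z))"
    by eventually_elim (metis lip add_0)
  then have "(\<integral>\<^sup>+ z. h (fst z) \<partial>g) \<le> (\<integral>\<^sup>+ z. c * ennreal (dist (fst z) (snd z)) \<partial>g)"
    by (rule nn_integral_mono_AE)
  also have "\<dots> \<le> c * (\<integral>\<^sup>+ z. ennreal (dist (fst z) (snd z)) \<partial>g)"
    using c by (rule nn_integral_cmult_le)
  finally show ?thesis
    using nn_integral_distr[OF fst_meas, of h] h_p marg_p by simp
qed

lemma nn_integral_le_wasserstein1:
  fixes h :: "'x::metric_space \<Rightarrow> ennreal"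
  assumes "prob_space p" "prob_space q"
    and h_p: "h \<in> borel_measurable p" and h_q: "h \<in> borel_measurable q"
    and h_q_0: "integral\<^sup>N q h = 0"
    and c: "c < top"
    and lip: "\<And>x y. h x \<le> h y + c * ennreal (dist x y)"
  shows "integral\<^sup>N p h \<le> c * wasserstein1 p q"
proof (cases "c = 0")
  case True
  then show ?thesis
    using nn_integral_le_coupling_cost[OF pair_measure_in_couplings[OF assms(1,2)] h_p h_q h_q_0 c lip]
    by simp
next
  case False
  have "integral\<^sup>N p h / c \<le> wasserstein1 p q"
    unfolding wasserstein1_def
  proof (rule INF_greatest)
    fix g assume "g \<in> couplings p q"
    from nn_integral_le_coupling_cost[OF this h_p h_q h_q_0 c lip]
    show "integral\<^sup>N p h / c \<le> (\<integral>\<^sup>+ z. ennreal (dist (fst z) (snd z)) \<partial>g)"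
      using False by (intro divide_le_posI_ennreal) (simp_all add: zero_less_iff_neq_zero)
  qed
  then have "integral\<^sup>N p h / c * c \<le> c * wasserstein1 p q"
    by (simp add: mult.commute mult_left_mono)
  also have "integral\<^sup>N p h / c * c = integral\<^sup>N p h"
    using False c by (simp add: ennreal_divide_times)
  finally show ?thesis .
qed

lemma integral_le_wasserstein1:
  fixes h :: "'x::metric_space \<Rightarrow> real"
  assumes "prob_space p" "prob_space q"
    and int_p: "integrable p h" and int_q: "integrable q h"
    and h_nonneg: "\<And>x. 0 \<le> h x"
    and h_q_0: "integral\<^sup>L q h = 0"
    and K: "0 \<le> K"
    and lip: "\<And>x y. h x \<le> h y + K * dist x y"
  shows "ennreal (integral\<^sup>L p h) \<le> ennreal K * wasserstein1 p q"
proof -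
  have nn_eq: "(\<integral>\<^sup>+ x. ennreal (h x) \<partial>r) = ennreal (integral\<^sup>L r h)" if "integrable r h" for r
    using that h_nonneg by (intro nn_integral_eq_integral) auto
  have "ennreal (h x) \<le> ennreal (h y + K * dist x y)" for x y
    using lip[of x y] by (rule ennreal_leI)
  also have "ennreal (h y + K * dist x y) = ennreal (h y) + ennreal K * ennreal (dist x y)" for x y
    using h_nonneg K by (simp add: ennreal_mult)
  finally have "ennreal (h x) \<le> ennreal (h y) + ennreal K * ennreal (dist x y)" for x y .
  then show ?thesis
    unfolding nn_eq[OF int_p, symmetric]
    using int_p int_q h_q_0 nn_eq[OF int_q]
    by (intro nn_integral_le_wasserstein1[OF assms(1,2)]) (auto simp: borel_measurable_integrable)
qed

lemma loss_Lipschitz_in_input: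
  fixes f :: "'x::metric_space \<Rightarrow> 't::metric_space \<Rightarrow> 'y::real_normed_vector"
    and L :: "'y \<Rightarrow> 'x \<Rightarrow> real"
  assumes shift: "\<And>y x1 x2. L (y + f x2 thstar - f x1 thstar) x2 = L y x1"
    and lip: "\<And>y d x. L (y + d) x - L y x \<le> LL * norm d"
    and LL: "0 \<le> LL"
    and mixed: "\<And>x1 x2 t1 t2. norm (f x1 t1 - f x1 t2 - f x2 t1 + f x2 t2)
                                \<le> Lf * dist x1 x2 * dist t1 t2"
  shows "L (f x2 t) x2 \<le> L (f x1 t) x1 + LL * Lf * dist t thstar * dist x2 x1"
proof -
  define y where "y = f x1 t + f x2 thstar - f x1 thstar"
  define d where "d = f x2 t - f x2 thstar - f x1 t + f x1 thstar"
  have "L (f x2 t) x2 = L (y + d) x2"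
    by (simp add: y_def d_def algebra_simps)
  also have "\<dots> \<le> L y x2 + LL * norm d"
    using lip[of y d x2] by simp
  also have "L y x2 = L (f x1 t) x1"
    unfolding y_def by (rule shift)
  also have "LL * norm d \<le> LL * (Lf * dist x2 x1 * dist t thstar)"
    unfolding d_def using mixed LL by (rule mult_left_mono)
  finally show ?thesis
    by (simp add: mult_ac)
qed

lemma neglog_antimono:
  assumes "1 < b" "0 \<le> s" "s \<le> t"
  shows "neglog b t \<le> neglog b s"
  using assms by (cases "s = 0") (auto simp: neglog_def)

lemma (in prob_space) cond_prob_mono:
  assumes "{w \<in> space M. P' w \<and> Q w} \<in> events"
    and "\<And>w. w \<in> space M \<Longrightarrow> Q w \<Longrightarrow> P w \<Longrightarrow> P' w"
  shows "cond_prob M P Q \<le> cond_prob M P' Q"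
  unfolding cond_prob_def
  using assms by (intro divide_right_mono finite_measure_mono) auto

theorem theorem1:
  fixes f :: "'x::metric_space \<Rightarrow> 't::metric_space \<Rightarrow> 'y::real_normed_vector"
    and L :: "'y \<Rightarrow> 'x \<Rightarrow> real"
    and thstar :: 't
    and p q :: "'x measure"
    and M :: "'w measure"
    and th :: "'w \<Rightarrow> 't"
    and LL Lf eps b :: real
  assumes b: "1 < b"
    and p: "prob_space p" "sets p = sets borel"
    and q: "prob_space q" "sets q = sets borel"
    and M: "prob_space M"
    and th_rv: "th \<in> M \<rightarrow>\<^sub>M borel"
    and int_p: "\<And>t. integrable p (\<lambda>x. L (f x t) x)"
    and int_q: "\<And>t. integrable q (\<lambda>x. L (f x t) x)"
    and meas_q: "{w \<in> space M. err f L (th w) q = 0} \<in> sets M"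
    and meas_p: "{w \<in> space M. err f L (th w) p \<le> eps} \<in> sets M"
    and pos: "\<P>(w in M. err f L (th w) q = 0) > 0"
    and eps: "eps > 0"
    and A1: "\<And>y x. L y x \<ge> 0 \<and> (L y x = 0 \<longleftrightarrow> y = f x thstar)"
    and A2: "\<And>y x1 x2. L (y + f x2 thstar - f x1 thstar) x2 = L y x1"
    and LL: "LL \<ge> 0"
    and A3: "\<And>y d x. L (y + d) x - L y x \<le> LL * norm d"
    and Lf: "Lf \<ge> 0"
    and A4: "\<And>x1 x2 t1 t2. norm (f x1 t1 - f x1 t2 - f x2 t1 + f x2 t2)
                             \<le> Lf * dist x1 x2 * dist t1 t2"
  shows "neglog b (\<P>(w in M. err f L (th w) p \<le> eps \<bar> err f L (th w) q = 0))
         \<le> neglog b (\<P>(w in M. ennreal (dist (th w) thstar)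
                     \<le> ennreal eps / (ennreal (LL * Lf) * wasserstein1 p q)
                   \<bar> err f L (th w) q = 0))"
proof -
  interpret M: prob_space M by (rule M)
  have err_p_le: "err f L t p \<le> eps"
    if err_q: "err f L t q = 0"
      and close: "ennreal (dist t thstar) \<le> ennreal eps / (ennreal (LL * Lf) * wasserstein1 p q)"
    for t
  proof -
    have "ennreal (err f L t p) \<le> ennreal (LL * Lf * dist t thstar) * wasserstein1 p q"
      unfolding err_def
      by (rule integral_le_wasserstein1[OF p(1) q(1) int_p int_q])
        (use A1 err_q LL Lf loss_Lipschitz_in_input[OF A2 A3 LL A4] in \<open>auto simp: err_def\<close>)
    also have "\<dots> = ennreal (dist t thstar) * (ennreal (LL * Lf) * wasserstein1 p q)"
      using LL Lf by (simp add: ennreal_mult mult_ac)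
    also have "\<dots> \<le> ennreal eps"
      using close by (rule ennreal_mult_le_of_le_divide)
    finally show ?thesis
      using eps by simp
  qed
  have "\<P>(w in M. ennreal (dist (th w) thstar)
                     \<le> ennreal eps / (ennreal (LL * Lf) * wasserstein1 p q)
                   \<bar> err f L (th w) q = 0)
        \<le> \<P>(w in M. err f L (th w) p \<le> eps \<bar> err f L (th w) q = 0)"
    using err_p_le by (intro M.cond_prob_mono sets.sets_Collect_conj meas_p meas_q) auto
  then show ?thesis
    using b by (intro neglog_antimono) (auto simp: cond_prob_def)
qed

end
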